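(* For every program $C\in$ pProgs and every $\omega$-chain of run-times $f_1\preceq f_2\preceq\cdots$ in $\mathbb{T}$, $\mathsf{ert}[C](\sup_n f_n)=\sup_n \mathsf{ert}[C](f_n)$, where suprema are taken pointwise.
   Context: Programs $C\in$ pProgs are generated by the grammar $C ::= \mathtt{empty} \mid \mathtt{skip} \mid \mathtt{halt} \mid x :\approx \mu \mid C;C \mid \{C\}\,\square\,\{C\} \mid \mathtt{if}\,(\xi)\,\{C\}\,\mathtt{else}\,\{C\} \mid \mathtt{while}\,(\xi)\,\{C\}$, where $x$ is a program variable, $\mu$ a distribution expression and $\xi$ a probabilistic guard. A state $\sigma\in\Sigma$ maps variables to values; $[\![\mu]\!]:\Sigma\to\mathcal{D}(\mathsf{Vals})$ gives discrete distributions of total mass 1, and $[\xi:\mathsf{true}](\sigma)$, $[\xi:\mathsf{false}](\sigma)=1-[\xi:\mathsf{true}](\sigma)$ are the guard probabilities. Run-times: $\mathbb{T}=\{f:\Sigma\to\mathbb{R}_{\ge0}\cup\{\infty\}\}$, ordered pointwise by $\preceq$, with pointwise arithmetic; $\mathbf{c}=\lambda\sigma.c$. The transformer $\mathsf{ert}[C]:\mathbb{T}\to\mathbb{T}$: $\mathsf{ert}[\mathtt{empty}](f)=f$; $\mathsf{ert}[\mathtt{skip}](f)=\mathbf{1}+f$; $\mathsf{ert}[\mathtt{halt}](f)=\mathbf{0}$; $\mathsf{ert}[x:\approx\mu](f)=\mathbf{1}+\lambda\sigma.\sum_v[\![\mu]\!](\sigma)(v)\, f(\sigma[x/v])$; $\mathsf{ert}[C_1;C_2](f)=\mathsf{ert}[C_1](\mathsf{ert}[C_2](f))$;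 $\mathsf{ert}[\{C_1\}\square\{C_2\}](f)=\max\{\mathsf{ert}[C_1](f),\mathsf{ert}[C_2](f)\}$; $\mathsf{ert}[\mathtt{if}(\xi)\{C_1\}\mathtt{else}\{C_2\}](f)=\mathbf{1}+[\xi:\mathsf{true}]\cdot\mathsf{ert}[C_1](f)+[\xi:\mathsf{false}]\cdot\mathsf{ert}[C_2](f)$; $\mathsf{ert}[\mathtt{while}(\xi)\{C'\}](f)=\mathrm{lfp}\,X.\ \mathbf{1}+[\xi:\mathsf{false}]\cdot f+[\xi:\mathsf{true}]\cdot\mathsf{ert}[C'](X)$. *)

theory Defs
  imports "HOL-Probability.Probability_Mass_Function"
begin

type_synonym ('x, 'v) state = "'x \<Rightarrow> 'v"
type_synonym ('x, 'v) runtime = "('x, 'v) state \<Rightarrow> ennreal"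

text \<open>Probabilistic guards are given by a map from states to a distribution on bool,
  so that [xi:true](s) = pmf (xi s) True and [xi:false](s) = 1 - [xi:true](s).\<close>

datatype ('x, 'v) prog =
    Empty
  | Skip
  | Halt
  | Assign 'x "('x, 'v) state \<Rightarrow> 'v pmf"
  | Seq "('x, 'v) prog" "('x, 'v) prog"
  | NDet "('x, 'v) prog" "('x, 'v) prog"
  | If "('x, 'v) state \<Rightarrow> bool pmf" "('x, 'v) prog" "('x, 'v) prog"
  | While "('x, 'v) state \<Rightarrow> bool pmf" "('x, 'v) prog"

primrec ert :: "('x, 'v) prog \<Rightarrow> ('x, 'v) runtime \<Rightarrow> ('x, 'v) runtime" where
  "ert Empty f = f"
| "ert Skip f = (\<lambda>s. 1 + f s)"
| "ert Halt f = (\<lambda>s. 0)"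
| "ert (Assign x mu) f =
     (\<lambda>s. 1 + (\<integral>\<^sup>+ v. ennreal (pmf (mu s) v) * f (s(x := v)) \<partial>count_space UNIV))"
| "ert (Seq C1 C2) f = ert C1 (ert C2 f)"
| "ert (NDet C1 C2) f = (\<lambda>s. max (ert C1 f s) (ert C2 f s))"
| "ert (If xi C1 C2) f =
     (\<lambda>s. 1 + ennreal (pmf (xi s) True) * ert C1 f s
            + ennreal (pmf (xi s) False) * ert C2 f s)"
| "ert (While xi C) f =
     lfp (\<lambda>X s. 1 + ennreal (pmf (xi s) False) * f s
                  + ennreal (pmf (xi s) True) * ert C X s)"

end

theory Submission
  imports Defs
begin

text \<open>By induction on the program, ert C is sup-continuous: every constructor combines
  continuous transformers with constants, addition, scaling, pointwise maximum and
  nonnegative integration (monotone convergence). For a loop, the least fixed point of a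
  functional that is jointly continuous in the run-time and the fixed-point variable is the
  supremum of its Kleene iterates, each of which is continuous in the run-time.\<close>

lemma sup_continuous_max_pointwise:
  fixes F G :: "'a::complete_lattice \<Rightarrow> 's \<Rightarrow> 'b::complete_linorder"
  assumes F: "sup_continuous F" and G: "sup_continuous G"
  shows "sup_continuous (\<lambda>f s. max (F f s) (G f s))"
  unfolding sup_max[symmetric]
  by (rule sup_continuous_fun, rule sup_continuous_sup)
    (rule sup_continuous_applyD[OF F], rule sup_continuous_applyD[OF G])

lemma sup_continuous_affine_pointwise:
  fixes F G :: "'a::complete_lattice \<Rightarrow> 's \<Rightarrow> ennreal"
  assumes F: "sup_continuous F" and G: "sup_continuous G"
  shows "sup_continuous (\<lambda>f s. a s + p s * F f s + q s * G f s)"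
  by (rule sup_continuous_fun, intro sup_continuous_add_ennreal sup_continuous_const
      sup_continuous_mult_left_ennreal sup_continuous_applyD[OF F] sup_continuous_applyD[OF G])

lemma sup_continuous_expectation_update:
  "sup_continuous (\<lambda>(f :: 's \<Rightarrow> ennreal) s. \<integral>\<^sup>+ v. w s v * f (u s v) \<partial>count_space UNIV)"
  by (rule sup_continuous_fun, rule sup_continuous_nn_integral)
    (intro sup_continuous_mult_left_ennreal sup_continuous_apply, simp)

lemma sup_continuous_lfp_loop:
  fixes F :: "('s \<Rightarrow> ennreal) \<Rightarrow> 's \<Rightarrow> ennreal"
  assumes F: "sup_continuous F"
  shows "sup_continuous (\<lambda>f. lfp (\<lambda>X s. a s + p s * f s + q s * F X s))"
proof (rule sup_continuous_lfp'')
  show "sup_continuous (\<lambda>X s. a s + p s * f s + q s * F X s)" for f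
    by (rule sup_continuous_fun, intro sup_continuous_add_ennreal sup_continuous_const
        sup_continuous_mult_left_ennreal sup_continuous_applyD[OF F])
  show "sup_continuous (\<lambda>f s. a s + p s * f s + q s * F (g f) s)" if "sup_continuous g" for g
    by (rule sup_continuous_fun, intro sup_continuous_add_ennreal sup_continuous_const
        sup_continuous_mult_left_ennreal sup_continuous_apply
        sup_continuous_applyD[OF sup_continuous_compose[OF F that]])
qed

lemma sup_continuous_ert: "sup_continuous (ert C)"
proof (induction C)
  case Empty
  then show ?case by (simp add: sup_continuous_id)
next
  case Halt
  then show ?case by (simp add: sup_continuous_const)
next
  case Skip
  have "sup_continuous (\<lambda>f s. 1 + f s :: ennreal)"
    by (rule sup_continuous_fun, intro sup_continuous_add_ennreal sup_continuous_const
        sup_continuous_apply)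
  then show ?case by simp
next
  case (Assign x mu)
  have "sup_continuous (\<lambda>f s. 1 + (\<integral>\<^sup>+ v. ennreal (pmf (mu s) v) * f (s(x := v)) \<partial>count_space UNIV))"
    by (rule sup_continuous_fun, intro sup_continuous_add_ennreal sup_continuous_const
        sup_continuous_applyD[OF sup_continuous_expectation_update])
  then show ?case by simp
next
  case (Seq C1 C2)
  then show ?case by (simp add: sup_continuous_compose)
next
  case (NDet C1 C2)
  then show ?case
    using sup_continuous_max_pointwise by (simp add: fun_eq_iff)
next
  case (If xi C1 C2)
  then show ?case
    using sup_continuous_affine_pointwise by simp
next
  case (While xi C)
  then show ?case
    using sup_continuous_lfp_loop by simp
qed

theorem lemma1:
  fixes C :: "('x, 'v) prog" and f :: "nat \<Rightarrow> ('x, 'v) runtime"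
  assumes "incseq f"
  shows "ert C (SUP n. f n) = (SUP n. ert C (f n))"
  using sup_continuousD[OF sup_continuous_ert] assms by (simp add: mono_def)

end
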